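(* Let $X=[\mathbf x_1,\ldots,\mathbf x_p]\in\mathbb R^{n\times p}$ with $\|\mathbf x_i\|_2\neq0$ for all $i$, $\mathbf y\in\mathbb R^n$, $\lambda\ge0$, and $f(\boldsymbol\beta)=\frac12\|X\boldsymbol\beta-\mathbf y\|_2^2+\lambda\|\boldsymbol\beta\|_1$. Generate sequences as follows. Set $\mathbf s^0=\mathbf 0$ and $\boldsymbol\beta^0=\mathbf 0$. For $k=1,2,\ldots$: first compute $\boldsymbol\beta^k$ by one cyclic pass of coordinate descent started from $\mathbf s^{k-1}$, i.e. for $i=1,\ldots,p$, $$\beta_i^k=\arg\min_{\beta\in\mathbb R} f([\beta_1^k,\ldots,\beta_{i-1}^k,\beta,s_{i+1}^{k-1},\ldots,s_p^{k-1}]^T);$$ then set a history point $\mathbf h^k$, where either $\mathbf h^k=\mathbf s^{k-1}$ for all $k$ (scheme CD+SRRC) or $\mathbf h^k=\boldsymbol\beta^{k-1}$ for all $k$ (scheme CD+SRRT); let $\alpha^k$ be a minimizer over $\alpha\in\mathbb R$ of $f((1-\alpha)\mathbf h^k+\alpha\boldsymbol\beta^k)$, and set $\mathbf s^k=(1-\alpha^k)\mathbf h^k+\alpha^k\boldsymbol\beta^k$. Then for either scheme, for all $k\ge1$, $$f(\mathbf s^{k-1})\ge f(\boldsymbol\beta^k)\ge f(\mathbf s^k)\ge f(\boldsymbol\beta^{k+1}).$$ Moreover, if $f(\mathbf s^{k-1})=f(\boldsymbol\beta^k)$, then $\mathbf s^{k-1}=\boldsymbol\beta^k$ and $f(\boldsymbol\beta^k)=\min_{\boldsymbol\beta}f(\boldsymbol\beta)$.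 Consequently, $\lim_{k\to\infty}f(\boldsymbol\beta^k)=\min_{\boldsymbol\beta}f(\boldsymbol\beta)$.
   Context: The coordinate update has the closed form $\beta_i^k=S(\mathbf x_i^T\mathbf y-\sum_{j<i}\mathbf x_i^T\mathbf x_j\beta_j^k-\sum_{j>i}\mathbf x_i^T\mathbf x_j s_j^{k-1},\lambda)/\|\mathbf x_i\|_2^2$, where $S(x,\lambda)=x-\lambda$ if $x>\lambda$, $x+\lambda$ if $x<-\lambda$, and $0$ if $|x|\le\lambda$. *)

theory Defs
  imports "HOL-Analysis.Analysis"
begin

text \<open>Design matrix X has n rows and p columns: X :: real^'p^'n, so X *v beta :: real^'n.
  The coordinate index type 'p carries a linear order giving the cyclic order 1,...,p.\<close>

definition lasso_obj :: "real^'p^'n \<Rightarrow> real^'n \<Rightarrow> real \<Rightarrow> real^'p \<Rightarrow> real" where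
  "lasso_obj X y lam b = (1/2) * (norm (X *v b - y))\<^sup>2 + lam * (\<Sum>i\<in>UNIV. \<bar>b $ i\<bar>)"

definition cd_point :: "real^('p::{finite,linorder}) \<Rightarrow> ('p::{finite,linorder}) \<Rightarrow> real \<Rightarrow> real^('p::{finite,linorder}) \<Rightarrow> real^('p::{finite,linorder})" where
  "cd_point b i t s = (\<chi> j. if j < i then b $ j else if j = i then t else s $ j)"

end

theory Submission
  imports Defs
begin

text \<open>
  Since the objective is the sum of a quadratic and a separable convex term, its restriction to
  coordinate i is strongly convex with modulus the squared norm of the i-th column.  Hence a
  cyclic pass from s decreases the objective by at least c times the squared distance travelled,
  with c > 0 independent of s; the extrapolation step never increases it (take \<alpha> = 1).
  This yields the chain of inequalities, and a stalled pass is a fixed point, hence a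
  coordinatewise minimum, which for such objectives is a global one.  For the limit, the steps of
  the passes tend to zero, so cluster points of the iterates are coordinatewise minima.  The
  iterates need not be bounded (\<lambda> = 0 with singular X), but their images under
  b \<mapsto> (X b, \<lambda> b) are, and the objective factors continuously through this map.
\<close>

section \<open>Convexity of the lasso objective\<close>

lemma norm_convex_combination_sq:
  fixes p q :: "'a::real_inner"
  shows "(norm ((1 - t) *\<^sub>R p + t *\<^sub>R q))\<^sup>2
         = (1 - t) * (norm p)\<^sup>2 + t * (norm q)\<^sup>2 - t * (1 - t) * (norm (p - q))\<^sup>2"
  unfolding power2_norm_eq_inner
  by (simp add: inner_add_left inner_add_right inner_commute
      algebra_simps power2_eq_square)

lemma sum_abs_convex_combination:
  fixes a b :: "real^'p"
  assumes "0 \<le> t" "t \<le> 1"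
  shows "(\<Sum>i\<in>UNIV. \<bar>((1 - t) *\<^sub>R a + t *\<^sub>R b) $ i\<bar>)
         \<le> (1 - t) * (\<Sum>i\<in>UNIV. \<bar>a $ i\<bar>) + t * (\<Sum>i\<in>UNIV. \<bar>b $ i\<bar>)"
proof -
  have "\<bar>(1 - t) * a $ i + t * b $ i\<bar> \<le> (1 - t) * \<bar>a $ i\<bar> + t * \<bar>b $ i\<bar>" for i
    using abs_triangle_ineq[of "(1 - t) * a $ i" "t * b $ i"] assms by (simp add: abs_mult)
  then show ?thesis
    by (simp add: sum_distrib_left sum.distrib[symmetric] sum_mono)
qed

lemma power2_norm_vec_eq_sum: "(norm (x :: real^'p))\<^sup>2 = (\<Sum>i\<in>UNIV. (x $ i)\<^sup>2)"
  unfolding power2_norm_eq_inner inner_vec_def by (simp add: power2_eq_square)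

lemma lasso_obj_nonneg: "0 \<le> lam \<Longrightarrow> 0 \<le> lasso_obj X y lam b"
  unfolding lasso_obj_def by (intro add_nonneg_nonneg mult_nonneg_nonneg sum_nonneg) auto

lemma lasso_obj_convex_combination:
  fixes X :: "real^'p^'n"
  assumes "0 \<le> lam" "0 \<le> t" "t \<le> 1"
  shows "lasso_obj X y lam ((1 - t) *\<^sub>R a + t *\<^sub>R b)
         \<le> (1 - t) * lasso_obj X y lam a + t * lasso_obj X y lam b
            - t * (1 - t) / 2 * (norm (X *v (a - b)))\<^sup>2"
proof -
  let ?r = "\<lambda>v. X *v v - y"
  have residual: "?r ((1 - t) *\<^sub>R a + t *\<^sub>R b) = (1 - t) *\<^sub>R ?r a + t *\<^sub>R ?r b"
    by (simp add: matrix_vector_right_distrib matrix_vector_mult_scaleR algebra_simps)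
  have residual_diff: "?r a - ?r b = X *v (a - b)"
    by (simp add: matrix_vector_mult_diff_distrib)
  have "lam * (\<Sum>i\<in>UNIV. \<bar>((1 - t) *\<^sub>R a + t *\<^sub>R b) $ i\<bar>)
        \<le> (1 - t) * (lam * (\<Sum>i\<in>UNIV. \<bar>a $ i\<bar>)) + t * (lam * (\<Sum>i\<in>UNIV. \<bar>b $ i\<bar>))"
    using mult_left_mono[OF sum_abs_convex_combination[OF assms(2,3)] assms(1)]
    by (simp add: algebra_simps)
  then show ?thesis
    unfolding lasso_obj_def residual norm_convex_combination_sq residual_diff
    by (simp add: algebra_simps add_divide_distrib diff_divide_distrib)
qed

lemma cd_point_convex_combination:
  "cd_point b i ((1 - t) * u + t * v) s = (1 - t) *\<^sub>R cd_point b i u s + t *\<^sub>R cd_point b i v s"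
  by (simp add: cd_point_def vec_eq_iff algebra_simps)

lemma cd_point_diff: "cd_point b i u s - cd_point b i v s = (u - v) *\<^sub>R axis i 1"
  by (simp add: cd_point_def vec_eq_iff axis_def)

lemma lasso_obj_section_min_gap:
  fixes X :: "real^('p::{finite,linorder})^'n"
  assumes lam: "0 \<le> lam"
    and min: "\<forall>t. lasso_obj X y lam (cd_point b i m s) \<le> lasso_obj X y lam (cd_point b i t s)"
  shows "lasso_obj X y lam (cd_point b i m s) + (norm (column i X))\<^sup>2 / 4 * (m - u)\<^sup>2
         \<le> lasso_obj X y lam (cd_point b i u s)"
proof -
  let ?f = "lasso_obj X y lam"
  have "?f (cd_point b i m s) \<le> ?f (cd_point b i ((1 - 1/2) * m + 1/2 * u) s)"
    using min by blast
  also have "\<dots> \<le> (1 - 1/2) * ?f (cd_point b i m s) + 1/2 * ?f (cd_point b i u s)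
                  - 1/2 * (1 - 1/2) / 2 * (norm (X *v (cd_point b i m s - cd_point b i u s)))\<^sup>2"
    unfolding cd_point_convex_combination by (rule lasso_obj_convex_combination) (use lam in auto)
  also have "(norm (X *v (cd_point b i m s - cd_point b i u s)))\<^sup>2 = (norm (column i X))\<^sup>2 * (m - u)\<^sup>2"
    by (simp add: cd_point_diff matrix_vector_mult_scaleR matrix_vector_mult_basis power_mult_distrib)
  finally show ?thesis by (simp add: field_simps)
qed

lemma lasso_obj_cd_pass_decrease:
  fixes X :: "real^('p::{finite,linorder})^'n"
  assumes lam: "0 \<le> lam"
    and cd: "\<forall>i t. lasso_obj X y lam (cd_point b i (b $ i) s) \<le> lasso_obj X y lam (cd_point b i t s)"
    and c: "\<forall>i. c \<le> (norm (column i X))\<^sup>2 / 4"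
  shows "lasso_obj X y lam b + c * (norm (b - s))\<^sup>2 \<le> lasso_obj X y lam s"
proof -
  let ?f = "lasso_obj X y lam"
  text \<open>The intermediate points of the pass are mixed A for the initial segments A.\<close>
  define mixed where "mixed A = (\<chi> j. if j \<in> A then b $ j else s $ j)" for A
  have "?f (mixed A) + c * (\<Sum>j\<in>A. (b $ j - s $ j)\<^sup>2) \<le> ?f s"
    if "\<forall>j\<in>A. \<forall>k<j. k \<in> A" for A
    using finite[of A] that
  proof (induction A rule: finite_linorder_max_induct)
    case empty
    show ?case by (simp add: mixed_def)
  next
    case (insert m A)
    have A: "A = {j. j < m}"
      using insert.hyps(2) insert.prems by auto
    have "mixed A = cd_point b m (s $ m) s" "mixed (insert m A) = cd_point b m (b $ m) s"
      by (auto simp: mixed_def cd_point_def vec_eq_iff A)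
    moreover have "c * (b $ m - s $ m)\<^sup>2 \<le> (norm (column m X))\<^sup>2 / 4 * (b $ m - s $ m)\<^sup>2"
      using c by (intro mult_right_mono) auto
    ultimately have "?f (mixed (insert m A)) + c * (b $ m - s $ m)\<^sup>2 \<le> ?f (mixed A)"
      using cd lasso_obj_section_min_gap[OF lam, where b = b and i = m and m = "b $ m" and s = s
          and u = "s $ m"] by fastforce
    moreover have "?f (mixed A) + c * (\<Sum>j\<in>A. (b $ j - s $ j)\<^sup>2) \<le> ?f s"
      using insert.IH by (simp add: A less_trans)
    moreover have "m \<notin> A" using A by simp
    ultimately show ?case by (simp add: distrib_left)
  qed
  from this[of UNIV] show ?thesis
    by (simp add: mixed_def power2_norm_vec_eq_sum)
qed

section \<open>Coordinatewise minima are global minima\<close>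

lemma lasso_obj_add:
  "lasso_obj X y lam (b + d) = lasso_obj X y lam b + inner (X *v b - y) (X *v d)
     + (norm (X *v d))\<^sup>2 / 2 + lam * (\<Sum>i\<in>UNIV. \<bar>b $ i + d $ i\<bar> - \<bar>b $ i\<bar>)"
proof -
  have residual: "X *v (b + d) - y = (X *v b - y) + X *v d"
    by (simp add: matrix_vector_right_distrib)
  have "(norm (X *v (b + d) - y))\<^sup>2
        = (norm (X *v b - y))\<^sup>2 + 2 * inner (X *v b - y) (X *v d) + (norm (X *v d))\<^sup>2"
    unfolding residual power2_norm_eq_inner
    by (simp add: inner_add_left inner_add_right inner_commute)
  then show ?thesis
    by (simp add: lasso_obj_def sum_subtractf algebra_simps)
qed

lemma lasso_obj_coordinatewise_min_lower_bound:
  fixes X :: "real^'p^'n"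
  assumes cw: "\<forall>i t. lasso_obj X y lam b \<le> lasso_obj X y lam (b + t *\<^sub>R axis i 1)"
  shows "lasso_obj X y lam b
         \<le> lasso_obj X y lam (b + d) + (\<Sum>i\<in>UNIV. (d $ i)\<^sup>2 * (norm (column i X))\<^sup>2) / 2"
proof -
  let ?r = "X *v b - y"
  let ?g = "\<lambda>i. d $ i * inner ?r (column i X) + (d $ i)\<^sup>2 * (norm (column i X))\<^sup>2 / 2
               + lam * (\<bar>b $ i + d $ i\<bar> - \<bar>b $ i\<bar>)"
  have "0 \<le> ?g i" for i
  proof -
    have "(\<Sum>j\<in>UNIV. \<bar>b $ j + (d $ i *\<^sub>R axis i 1) $ j\<bar> - \<bar>b $ j\<bar>)
          = \<bar>b $ i + d $ i\<bar> - \<bar>b $ i\<bar>"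
      by (subst sum.remove[where x = i]) (auto simp: axis_def)
    moreover have "lasso_obj X y lam b \<le> lasso_obj X y lam (b + d $ i *\<^sub>R axis i 1)"
      using cw by blast
    ultimately show ?thesis
      using lasso_obj_add[of X y lam b "d $ i *\<^sub>R axis i 1"]
      by (simp add: matrix_vector_mult_scaleR matrix_vector_mult_basis power_mult_distrib)
  qed
  then have "0 \<le> (\<Sum>i\<in>UNIV. ?g i)" by (simp add: sum_nonneg)
  also have "(\<Sum>i\<in>UNIV. ?g i) = inner ?r (X *v d)
      + (\<Sum>i\<in>UNIV. (d $ i)\<^sup>2 * (norm (column i X))\<^sup>2) / 2
      + lam * (\<Sum>i\<in>UNIV. \<bar>b $ i + d $ i\<bar> - \<bar>b $ i\<bar>)"
    by (simp add: sum.distrib sum_distrib_left sum_divide_distrib matrix_mult_sum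
        scalar_mult_eq_scaleR inner_sum_right)
  finally show ?thesis
    using lasso_obj_add[of X y lam b d] zero_le_power2[of "norm (X *v d)"] by linarith
qed

lemma lasso_obj_coordinatewise_min_imp_min:
  fixes X :: "real^'p^'n"
  assumes lam: "0 \<le> lam"
    and cw: "\<forall>i t. lasso_obj X y lam b \<le> lasso_obj X y lam (b + t *\<^sub>R axis i 1)"
  shows "lasso_obj X y lam b \<le> lasso_obj X y lam b'"
proof -
  let ?f = "lasso_obj X y lam"
  define C where "C = (\<Sum>i\<in>UNIV. ((b' - b) $ i)\<^sup>2 * (norm (column i X))\<^sup>2) / 2"
  have C: "0 \<le> C" unfolding C_def by (simp add: sum_nonneg)
  text \<open>Along the segment from b to b' the objective lies below the chord but above
    f b - t^2 C, so t (f b - f b') \<le> t^2 C for all small t > 0.\<close>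
  have small_steps: "?f b \<le> ?f b' + t * C" if t: "0 < t" "t \<le> 1" for t
  proof -
    have "?f b \<le> ?f (b + t *\<^sub>R (b' - b)) + t\<^sup>2 * C"
      using lasso_obj_coordinatewise_min_lower_bound[OF cw, of "t *\<^sub>R (b' - b)"]
      by (simp add: C_def power_mult_distrib sum_distrib_left mult_ac)
    also have "b + t *\<^sub>R (b' - b) = (1 - t) *\<^sub>R b + t *\<^sub>R b'"
      by (simp add: algebra_simps)
    also have "?f \<dots> \<le> (1 - t) * ?f b + t * ?f b'"
    proof -
      have "0 \<le> t * (1 - t) / 2 * (norm (X *v (b - b')))\<^sup>2" using t by simp
      then show ?thesis
        using lasso_obj_convex_combination[OF lam, where t = t and a = b and b = b' and X = X and y = y] t
        by linarith
    qed
    finally have "t * ?f b \<le> t * (?f b' + t * C)"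
      by (simp add: power2_eq_square algebra_simps)
    then show ?thesis using t by simp
  qed
  show ?thesis
  proof (rule field_le_epsilon)
    fix e :: real assume e: "0 < e"
    define t where "t = min 1 (e / (C + 1))"
    have t: "0 < t" "t \<le> 1" using e C by (auto simp: t_def)
    have "t * C \<le> e / (C + 1) * C" using C unfolding t_def by (intro mult_right_mono) auto
    also have "\<dots> \<le> e" using e C by (simp add: field_simps)
    finally show "?f b \<le> ?f b' + e" using small_steps[OF t] by simp
  qed
qed

section \<open>Cluster points of coordinatewise near-minimizers\<close>

definition lasso_lift :: "real^'p^'n \<Rightarrow> real \<Rightarrow> real^'p \<Rightarrow> (real^'n) \<times> (real^'p)" where
  "lasso_lift X lam b = (X *v b, lam *\<^sub>R b)"

definition lasso_outer :: "real^'n \<Rightarrow> (real^'n) \<times> (real^'p) \<Rightarrow> real" where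
  "lasso_outer y z = (1/2) * (norm (fst z - y))\<^sup>2 + (\<Sum>i\<in>UNIV. \<bar>snd z $ i\<bar>)"

lemma lasso_obj_eq_outer_lift:
  "0 \<le> lam \<Longrightarrow> lasso_obj X y lam b = lasso_outer y (lasso_lift X lam b)"
  by (simp add: lasso_obj_def lasso_outer_def lasso_lift_def abs_mult sum_distrib_left)

lemma linear_lasso_lift: "linear (lasso_lift X lam)"
  by (rule linearI)
    (simp_all add: lasso_lift_def matrix_vector_right_distrib matrix_vector_mult_scaleR scaleR_add_right)

lemma continuous_on_lasso_outer: "continuous_on UNIV (lasso_outer y)"
  unfolding lasso_outer_def by (intro continuous_intros)

lemma norm_lasso_lift_le:
  assumes "0 \<le> lam"
  shows "norm (lasso_lift X lam b) \<le> sqrt (2 * lasso_obj X y lam b) + norm y + lasso_obj X y lam b"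
proof -
  let ?f = "lasso_obj X y lam b"
  have penalty: "0 \<le> lam * (\<Sum>i\<in>UNIV. \<bar>b $ i\<bar>)" using assms by (simp add: sum_nonneg)
  have "(norm (X *v b - y))\<^sup>2 \<le> 2 * ?f" using penalty by (simp add: lasso_obj_def)
  then have "norm (X *v b - y) \<le> sqrt (2 * ?f)" by (rule real_le_rsqrt)
  then have fit: "norm (X *v b) \<le> sqrt (2 * ?f) + norm y"
    using norm_triangle_ineq[of "X *v b - y" y] by simp
  have "norm (lam *\<^sub>R b) \<le> lam * (\<Sum>i\<in>UNIV. \<bar>b $ i\<bar>)"
    using mult_left_mono[OF norm_le_l1_cart assms] assms by simp
  also have "\<dots> \<le> ?f" by (simp add: lasso_obj_def)
  finally show ?thesis
    using norm_Pair_le[of "X *v b" "lam *\<^sub>R b"] fit by (simp add: lasso_lift_def)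
qed

lemma lasso_obj_limit_of_coordinatewise_minima:
  fixes X :: "real^'p^'n" and b :: "nat \<Rightarrow> real^'p" and e :: "'p \<Rightarrow> nat \<Rightarrow> real^'p"
  assumes lam: "0 \<le> lam"
    and bounded: "\<And>n. lasso_obj X y lam (b n) \<le> M"
    and vanish: "\<And>i. (\<lambda>n. e i n) \<longlonglongrightarrow> 0"
    and cw: "\<And>n i t. lasso_obj X y lam (b n + e i n) \<le> lasso_obj X y lam (b n + e i n + t *\<^sub>R axis i 1)"
  obtains b0 r where "strict_mono r" "(\<lambda>n. lasso_obj X y lam (b (r n))) \<longlonglongrightarrow> lasso_obj X y lam b0"
    "\<forall>i t. lasso_obj X y lam b0 \<le> lasso_obj X y lam (b0 + t *\<^sub>R axis i 1)"
proof -
  let ?f = "lasso_obj X y lam" and ?L = "lasso_lift X lam"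
  have "bounded (range (?L \<circ> b))"
    unfolding bounded_iff
  proof (intro exI ballI)
    fix z assume "z \<in> range (?L \<circ> b)"
    then obtain n where "z = ?L (b n)" by auto
    then have "norm z \<le> sqrt (2 * ?f (b n)) + norm y + ?f (b n)"
      using norm_lasso_lift_le[OF lam] by simp
    moreover have "sqrt (2 * ?f (b n)) \<le> sqrt (2 * M)" using bounded[of n] by simp
    ultimately show "norm z \<le> sqrt (2 * M) + norm y + M"
      using bounded[of n] by linarith
  qed
  then obtain z r where r: "strict_mono r" and z: "((?L \<circ> b) \<circ> r) \<longlonglongrightarrow> z"
    using bounded_imp_convergent_subsequence by blast
  have "closed (range ?L)"
    by (intro closed_subspace linear_subspace_image linear_lasso_lift subspace_UNIV)
  then have "z \<in> range ?L"
    by (rule closed_sequential_limits[THEN iffD1, rule_format, OF _ conjI[OF _ z]]) simp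
  then obtain b0 where b0: "z = ?L b0" by blast
  have lift_lim: "(\<lambda>n. ?f (b (r n) + v n)) \<longlonglongrightarrow> ?f (b0 + w)" if v: "v \<longlonglongrightarrow> w" for v w
  proof -
    have "bounded_linear ?L" using linear_lasso_lift linear_conv_bounded_linear by blast
    then have "(\<lambda>n. ?L (v n)) \<longlonglongrightarrow> ?L w" using v by (rule bounded_linear.tendsto)
    with z have "(\<lambda>n. ?L (b (r n)) + ?L (v n)) \<longlonglongrightarrow> ?L b0 + ?L w"
      unfolding b0 o_def by (rule tendsto_add)
    then have "(\<lambda>n. ?L (b (r n) + v n)) \<longlonglongrightarrow> ?L (b0 + w)"
      by (simp add: linear_add[OF linear_lasso_lift])
    then show ?thesis
      using continuous_on_tendsto_compose[OF continuous_on_lasso_outer] lam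
      by (simp add: lasso_obj_eq_outer_lift)
  qed
  have "?f b0 \<le> ?f (b0 + t *\<^sub>R axis i 1)" for i t
  proof -
    have e: "(\<lambda>n. e i (r n)) \<longlonglongrightarrow> 0"
      using LIMSEQ_subseq_LIMSEQ[OF vanish r] by (simp add: o_def)
    have "(\<lambda>n. ?f (b (r n) + e i (r n))) \<longlonglongrightarrow> ?f (b0 + 0)"
      using e by (rule lift_lim)
    moreover have "(\<lambda>n. ?f (b (r n) + (e i (r n) + t *\<^sub>R axis i 1)))
        \<longlonglongrightarrow> ?f (b0 + (0 + t *\<^sub>R axis i 1))"
      using e by (intro lift_lim tendsto_add tendsto_const)
    moreover have "\<forall>n. ?f (b (r n) + e i (r n)) \<le> ?f (b (r n) + (e i (r n) + t *\<^sub>R axis i 1))"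
      using cw by (simp add: add.assoc)
    ultimately show ?thesis by (simp add: LIMSEQ_le)
  qed
  moreover have "(\<lambda>n. ?f (b (r n))) \<longlonglongrightarrow> ?f b0"
    using lift_lim[of "\<lambda>n. 0" 0] by simp
  ultimately show ?thesis using that r by blast
qed

section \<open>Coordinate descent with an extrapolation step\<close>

lemma cd_point_decompose:
  "cd_point b i t s = b + (\<chi> j. if i < j then (s - b) $ j else 0) + (t - b $ i) *\<^sub>R axis i 1"
  by (auto simp: cd_point_def vec_eq_iff axis_def)

lemma cd_point_same: "cd_point b i t b = b + (t - b $ i) *\<^sub>R axis i 1"
  by (auto simp: cd_point_def vec_eq_iff axis_def)

locale cd_extrapolation =
  fixes X :: "real^('p::{finite,linorder})^'n" and y :: "real^'n" and lam :: real
    and beta s :: "nat \<Rightarrow> real^('p::{finite,linorder})"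
  assumes lam_nonneg: "0 \<le> lam"
    and column_nonzero: "\<And>i. column i X \<noteq> 0"
    and cd_pass: "\<And>k i t. lasso_obj X y lam (cd_point (beta (Suc k)) i (beta (Suc k) $ i) (s k))
                    \<le> lasso_obj X y lam (cd_point (beta (Suc k)) i t (s k))"
    and extrapolation_descent: "\<And>k. lasso_obj X y lam (s k) \<le> lasso_obj X y lam (beta k)"
begin

abbreviation obj where "obj \<equiv> lasso_obj X y lam"

lemma pass_sufficient_decrease:
  obtains c where "0 < c" "\<And>k. obj (beta (Suc k)) + c * (norm (beta (Suc k) - s k))\<^sup>2 \<le> obj (s k)"
proof
  let ?c = "Min (range (\<lambda>i. (norm (column i X))\<^sup>2 / 4))"
  show "0 < ?c" using column_nonzero by (subst Min_gr_iff) auto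
  show "obj (beta (Suc k)) + ?c * (norm (beta (Suc k) - s k))\<^sup>2 \<le> obj (s k)" for k
  proof (rule lasso_obj_cd_pass_decrease[OF lam_nonneg])
    show "\<forall>i. ?c \<le> (norm (column i X))\<^sup>2 / 4" by (intro allI Min_le) auto
  qed (use cd_pass in blast)
qed

lemma pass_descent: "obj (beta (Suc k)) \<le> obj (s k)"
proof -
  obtain c where "0 < c" "obj (beta (Suc k)) + c * (norm (beta (Suc k) - s k))\<^sup>2 \<le> obj (s k)"
    using pass_sufficient_decrease by blast
  moreover have "0 \<le> c * (norm (beta (Suc k) - s k))\<^sup>2" using \<open>0 < c\<close> by simp
  ultimately show ?thesis by linarith
qed

lemma stalled_pass_is_optimal:
  assumes "obj (s k) = obj (beta (Suc k))"
  shows "s k = beta (Suc k) \<and> (\<forall>b. obj (beta (Suc k)) \<le> obj b)"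
proof -
  obtain c where "0 < c" "obj (beta (Suc k)) + c * (norm (beta (Suc k) - s k))\<^sup>2 \<le> obj (s k)"
    using pass_sufficient_decrease by blast
  with assms have fixed: "s k = beta (Suc k)"
    by (simp add: mult_le_0_iff)
  have "obj (beta (Suc k)) \<le> obj (beta (Suc k) + t *\<^sub>R axis i 1)" for i t
    using cd_pass[of k i "beta (Suc k) $ i + t"] cd_pass[of k i "beta (Suc k) $ i"]
    by (simp add: fixed cd_point_same)
  then show ?thesis
    using fixed lasso_obj_coordinatewise_min_imp_min[OF lam_nonneg] by blast
qed

lemma objective_decseq: "decseq (\<lambda>k. obj (beta k))"
  by (rule decseq_SucI) (rule order_trans[OF pass_descent extrapolation_descent])

lemma objective_converges:
  obtains L where "(\<lambda>k. obj (beta k)) \<longlonglongrightarrow> L" "(\<lambda>k. obj (s k)) \<longlonglongrightarrow> L"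
proof -
  have "\<forall>k. 0 \<le> obj (beta k)" using lasso_obj_nonneg[OF lam_nonneg] by blast
  then obtain L where L: "(\<lambda>k. obj (beta k)) \<longlonglongrightarrow> L"
    using decseq_convergent[OF objective_decseq] by blast
  have "(\<lambda>k. obj (s k)) \<longlonglongrightarrow> L"
    by (intro tendsto_sandwich[OF _ _ LIMSEQ_Suc[OF L] L] always_eventually allI
        pass_descent extrapolation_descent)
  with L that show ?thesis by blast
qed

lemma steps_vanish: "(\<lambda>k. s k - beta (Suc k)) \<longlonglongrightarrow> 0"
proof -
  obtain c where c: "0 < c"
    and decrease: "\<And>k. obj (beta (Suc k)) + c * (norm (beta (Suc k) - s k))\<^sup>2 \<le> obj (s k)"
    using pass_sufficient_decrease by blast
  obtain L where Lbeta: "(\<lambda>k. obj (beta k)) \<longlonglongrightarrow> L" and Ls: "(\<lambda>k. obj (s k)) \<longlonglongrightarrow> L"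
    using objective_converges by blast
  let ?gap = "\<lambda>k. (obj (s k) - obj (beta (Suc k))) / c"
  have "?gap \<longlonglongrightarrow> (L - L) / c"
    using c by (intro tendsto_divide tendsto_diff Ls LIMSEQ_Suc[OF Lbeta] tendsto_const) simp
  then have gap: "?gap \<longlonglongrightarrow> 0" by simp
  have "(norm (s k - beta (Suc k)))\<^sup>2 \<le> ?gap k" for k
    using decrease[of k] c by (simp add: pos_le_divide_eq norm_minus_commute mult.commute)
  then have "(\<lambda>k. (norm (s k - beta (Suc k)))\<^sup>2) \<longlonglongrightarrow> 0"
    by (intro tendsto_sandwich[OF _ _ tendsto_const gap] always_eventually allI zero_le_power2)
  from tendsto_real_sqrt[OF this] have "(\<lambda>k. norm (s k - beta (Suc k))) \<longlonglongrightarrow> 0"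
    by simp
  then show ?thesis by (simp only: tendsto_norm_zero_iff)
qed

lemma objective_converges_to_min:
  "\<exists>b0. (\<forall>b. obj b0 \<le> obj b) \<and> (\<lambda>k. obj (beta k)) \<longlonglongrightarrow> obj b0"
proof -
  text \<open>In pass k + 1, coordinate i is optimised at the point beta (Suc k) + e i k.\<close>
  define e where "e i k = (\<chi> j. if i < j then (s k - beta (Suc k)) $ j else 0)" for i k
  have vanish: "(\<lambda>k. e i k) \<longlonglongrightarrow> 0" for i
  proof -
    have "(\<lambda>k. e i k) \<longlonglongrightarrow> (\<chi> j. 0)"
      unfolding e_def
    proof (rule tendsto_vec_lambda)
      show "(\<lambda>k. if i < j then (s k - beta (Suc k)) $ j else 0) \<longlonglongrightarrow> 0" for j
        using tendsto_vec_nth[OF steps_vanish, of j] by (cases "i < j") simp_all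
    qed
    then show ?thesis by (simp add: zero_vec_def)
  qed
  have cw: "obj (beta (Suc k) + e i k) \<le> obj (beta (Suc k) + e i k + t *\<^sub>R axis i 1)" for k i t
    using cd_pass[of k i "beta (Suc k) $ i + t"] cd_pass[of k i "beta (Suc k) $ i"]
    by (simp add: e_def cd_point_decompose)
  have bound: "obj (beta (Suc k)) \<le> obj (beta 0)" for k
    using decseqD[OF objective_decseq] by simp
  obtain b0 r where r: "strict_mono r"
    and sub: "(\<lambda>k. obj (beta (Suc (r k)))) \<longlonglongrightarrow> obj b0"
    and b0: "\<forall>i t. obj b0 \<le> obj (b0 + t *\<^sub>R axis i 1)"
    by (rule lasso_obj_limit_of_coordinatewise_minima[OF lam_nonneg,
        where b = "\<lambda>k. beta (Suc k)" and e = e, OF bound vanish cw])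
  obtain L where L: "(\<lambda>k. obj (beta k)) \<longlonglongrightarrow> L"
    using objective_converges by blast
  have "(\<lambda>k. obj (beta (Suc (r k)))) \<longlonglongrightarrow> L"
    using LIMSEQ_subseq_LIMSEQ[OF LIMSEQ_Suc[OF L] r] by (simp add: o_def)
  then have "L = obj b0" using sub by (rule LIMSEQ_unique)
  moreover have "\<forall>b. obj b0 \<le> obj b"
    using lasso_obj_coordinatewise_min_imp_min[OF lam_nonneg b0] by blast
  ultimately show ?thesis using L by (intro exI[where x = b0]) simp
qed

end

theorem theorem3:
  fixes X :: "real^('p::{finite,linorder})^'n"
    and y :: "real^'n" and lam :: real
    and beta s h :: "nat \<Rightarrow> real^('p::{finite,linorder})" and alpha :: "nat \<Rightarrow> real"
  assumes cols: "\<forall>i. norm (column i X) \<noteq> 0"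
    and lam: "lam \<ge> 0"
    and s0: "s 0 = 0" and beta0: "beta 0 = 0"
    and cd: "\<forall>k\<ge>1. \<forall>i. \<forall>t.
               lasso_obj X y lam (cd_point (beta k) i (beta k $ i) (s (k - 1)))
                 \<le> lasso_obj X y lam (cd_point (beta k) i t (s (k - 1)))"
    and scheme: "(\<forall>k\<ge>1. h k = s (k - 1)) \<or> (\<forall>k\<ge>1. h k = beta (k - 1))"
    and alpha_min: "\<forall>k\<ge>1. \<forall>a.
               lasso_obj X y lam ((1 - alpha k) *\<^sub>R h k + alpha k *\<^sub>R beta k)
                 \<le> lasso_obj X y lam ((1 - a) *\<^sub>R h k + a *\<^sub>R beta k)"
    and s_def: "\<forall>k\<ge>1. s k = (1 - alpha k) *\<^sub>R h k + alpha k *\<^sub>R beta k"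
  shows "(\<forall>k\<ge>1. lasso_obj X y lam (s (k - 1)) \<ge> lasso_obj X y lam (beta k)
              \<and> lasso_obj X y lam (beta k) \<ge> lasso_obj X y lam (s k)
              \<and> lasso_obj X y lam (s k) \<ge> lasso_obj X y lam (beta (k + 1)))
       \<and> (\<forall>k\<ge>1. lasso_obj X y lam (s (k - 1)) = lasso_obj X y lam (beta k) \<longrightarrow>
              s (k - 1) = beta k \<and> (\<forall>b. lasso_obj X y lam (beta k) \<le> lasso_obj X y lam b))
       \<and> (\<exists>b0. (\<forall>b. lasso_obj X y lam b0 \<le> lasso_obj X y lam b)
              \<and> (\<lambda>k. lasso_obj X y lam (beta k)) \<longlonglongrightarrow> lasso_obj X y lam b0)"
proof -
  let ?f = "lasso_obj X y lam"
  have extrapolation: "?f (s k) \<le> ?f (beta k)" for k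
  proof (cases "k = 0")
    case False
    then show ?thesis
      using alpha_min[rule_format, of k 1] s_def[rule_format, of k] by simp
  qed (simp add: s0 beta0)
  interpret cd_extrapolation X y lam beta s
  proof
    show "column i X \<noteq> 0" for i using cols by auto
    show "?f (cd_point (beta (Suc k)) i (beta (Suc k) $ i) (s k))
      \<le> ?f (cd_point (beta (Suc k)) i t (s k))" for k i t using cd[rule_format, of "Suc k" i t] by simp
  qed (use lam extrapolation in auto)
  show ?thesis
  proof (intro conjI allI impI)
    fix k :: nat assume k: "1 \<le> k"
    show "?f (beta k) \<le> ?f (s (k - 1))" using pass_descent[of "k - 1"] k by simp
    show "?f (s k) \<le> ?f (beta k)" by (rule extrapolation)
    show "?f (beta (k + 1)) \<le> ?f (s k)" using pass_descent[of k] by simp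
  next
    fix k :: nat assume "1 \<le> k" "?f (s (k - 1)) = ?f (beta k)"
    with stalled_pass_is_optimal[of "k - 1"] show "s (k - 1) = beta k" by simp
  next
    fix k :: nat and b assume "1 \<le> k" "?f (s (k - 1)) = ?f (beta k)"
    with stalled_pass_is_optimal[of "k - 1"] show "?f (beta k) \<le> ?f b" by simp
  qed (rule objective_converges_to_min)
qed

end
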